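(* Consider the iterative algorithm (described in the context) for the incomplete multi-view learning problem. The sequences $\{\mathcal{G}^k\}$ and $\{\mathcal{Y}^k\}$ it generates satisfy $\lim_{k\to\infty}\|\mathcal{G}^k-\mathcal{Y}^k\|_F=0$, $\lim_{k\to\infty}\|\mathcal{G}^{k+1}-\mathcal{G}^k\|_F=0$, and $\lim_{k\to\infty}\|\mathcal{Y}^{k+1}-\mathcal{Y}^k\|_F=0$.
   Context: Data: $m$ views $X_i\in\mathbb{R}^{d_i\times n}$, $i=1,\dots,m$, of $n$ samples; if the $j$-th instance of view $i$ is missing then the column $X_{i(:,j)}=0$. $P_i\in\mathbb{R}^{n\times n}$ is diagonal with $P_{i(j,j)}=1$ if the $j$-th instance of view $i$ is present and $0$ otherwise; $n_i$ is the number of present instances of view $i$. Assume $X_iP_iX_i^\top$ is invertible for each $i$. $\mathcal{M}\in\mathbb{R}^{n\times m\times n}$ is a given (incomplete) graph tensor, and $\Omega$ is the set of indices $(i,j,k)$ where $\mathcal{M}$ is observed; $P_\Omega(\mathcal{Z})$ keeps entries with indices in $\Omega$ and sets the others to $0$. For a graph tensor $\mathcal{G}\in\mathbb{R}^{n\times m\times n}$ write $G_i=\mathcal{G}_{(:,i,:)}\in\mathbb{R}^{n\times n}$. For $A\in\mathbb{R}^{d\times n}$ and $G\in\mathbb{R}^{n\times n}$, $\mathrm{tr}(AL_GA^\top)=\tfrac12\sum_{j,k}G_{(j,k)}\|A_{(:,j)}-A_{(:,k)}\|_2^2$. Parameters: $\lambda,\mu,\gamma>0$, $0<p\le1$, weights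 $w_1\ge\cdots\ge w_l\ge0$ with $l=\min(n,m)$, a semi-orthogonal $\Phi\in\mathbb{R}^{n\times r}$ ($\Phi^\top\Phi=I_r$) and $\Phi^c\in\mathbb{R}^{n\times(n-r)}$ with $\overline{\Phi}=[\Phi,\Phi^c]$ orthogonal. Tensor norm: for $\mathcal{X}\in\mathbb{R}^{n_1\times n_2\times n_3}$ with frontal slices $X^{(k)}$ and $\Psi\in\mathbb{R}^{n_3\times s}$, $\mathcal{X}_\Psi$ has frontal slices $X_\Psi^{(i)}=\sum_k\Psi_{ki}X^{(k)}$; $\|\mathcal{X}\|_{\Phi,w,S_p}^p=\sum_{i=1}^r\sum_{j=1}^l w_j\sigma_j(X_\Phi^{(i)})^p$, $\sigma_j$ the $j$-th smallest singular value. For a matrix $Y=U\Sigma V^\top$ (SVD), $S_{\tau,w,p}(Y)=U\mathrm{diag}(\gamma_j)V^\top$ with $\gamma_j$ (replacing $\sigma_j(Y)$) a global minimizer of $\min_{x\ge0}\frac12(x-\sigma_j(Y))^2+\tau w_jx^p$. With $f_i(A,W_i,G_i)=\|(A-W_i^\top X_i)P_i\|_F^2+\lambda\,\mathrm{tr}(AL_{G_i}A^\top)$, the algorithm is: initialize $k=0$, $\eta=1.1$, $\rho^0=10^{-4}$, $\delta_i^0=1/m$, $\mathcal{C}^0=0$, $\mathcal{G}^0=\mathcal{Y}^0=\mathcal{M}$. At iteration $k$: (1) $(A^{k+1},\{W_i^{k+1}\})$ minimizes $\sum_i\delta_i^k f_i(A,W_i,G_i^k)$ subject to $AA^\top=I_d$,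 with $W_i^{k+1}=(X_iP_iX_i^\top)^{-1}X_iP_i(A^{k+1})^\top$; (2) $\delta_i^{k+1}=n_i/\sqrt{f_i(A^{k+1},W_i^{k+1},G_i^k)}$; (3) $\mathcal{G}^{k+1}$ is the minimizer of $\lambda\sum_i\delta_i^{k+1}\mathrm{tr}(A^{k+1}L_{G_i}(A^{k+1})^\top)+\frac\gamma2\|P_\Omega(\mathcal{G})-P_\Omega(\mathcal{M})\|_F^2+\frac{\rho^k}2\|\mathcal{G}-\mathcal{Y}^k+\mathcal{C}^k/\rho^k\|_F^2$ subject to $G_i\ge0$ entrywise and $G_i\mathbf{1}=\mathbf{1}$ for all $i$; (4) with $\mathcal{B}^k=\mathcal{G}^{k+1}+\mathcal{C}^k/\rho^k$, $\mathcal{Y}^{k+1}=(\mathcal{Z})_{\overline{\Phi}^\top}$ where $\mathcal{Z}$ has frontal slices $S_{\mu/\rho^k,w,p}(B_\Phi^{k\,(i)})$ for $i\le r$ and $B_{\Phi^c}^{k\,(j)}$ for the remaining $n-r$ slices (a minimizer of $\frac{\mu}{\rho^k}\|\mathcal{Y}\|_{\Phi,w,S_p}^p+\frac12\|\mathcal{B}^k-\mathcal{Y}\|_F^2$); (5) $\mathcal{C}^{k+1}=\mathcal{C}^k+\rho^k(\mathcal{G}^{k+1}-\mathcal{Y}^{k+1})$; (6) $\rho^{k+1}=\eta\rho^k$. *)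

theory Defs
  imports Complex_Main "Jordan_Normal_Form.Gauss_Jordan_Elimination"
begin

(* Third-order tensors in R^{n1 x n2 x n3} are represented as functions
   nat => nat => nat => real; only entries with indices < n1, n2, n3 matter.
   All indices are 0-based (paper index j corresponds to j-1 here). *)
type_synonym tensor = "nat \<Rightarrow> nat \<Rightarrow> nat \<Rightarrow> real"

definition tfro :: "nat \<Rightarrow> nat \<Rightarrow> nat \<Rightarrow> tensor \<Rightarrow> real" where
  "tfro n1 n2 n3 T = sqrt (\<Sum>a<n1. \<Sum>b<n2. \<Sum>c<n3. (T a b c)\<^sup>2)"

definition fro2 :: "real mat \<Rightarrow> real" where
  "fro2 A = (\<Sum>a<dim_row A. \<Sum>b<dim_col A. (A $$ (a, b))\<^sup>2)"

(* matrix inverse (meaningful for invertible square matrices) *)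
definition minv :: "real mat \<Rightarrow> real mat" where
  "minv A = the (mat_inverse A)"

(* tr(A L_G A^T) = 1/2 sum_{j,k} G_{jk} ||A_{:,j} - A_{:,k}||^2, for A : d x n, G : n x n *)
definition trLap :: "real mat \<Rightarrow> real mat \<Rightarrow> real" where
  "trLap A G = (1/2) * (\<Sum>j<dim_col A. \<Sum>k<dim_col A.
      G $$ (j, k) * (\<Sum>t<dim_row A. (A $$ (t, j) - A $$ (t, k))\<^sup>2))"

definition lat_slice :: "nat \<Rightarrow> tensor \<Rightarrow> nat \<Rightarrow> real mat" where
  "lat_slice n T i = mat n n (\<lambda>(j, k). T j i k)"

definition fview :: "real \<Rightarrow> real mat \<Rightarrow> real mat \<Rightarrow> real mat \<Rightarrow> real mat \<Rightarrow> real mat \<Rightarrow> real" where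
  "fview lam Xi Pmat A Wi Gi = fro2 ((A - transpose_mat Wi * Xi) * Pmat) + lam * trLap A Gi"

definition mode3 :: "nat \<Rightarrow> tensor \<Rightarrow> real mat \<Rightarrow> tensor" where
  "mode3 n3 T Psi = (\<lambda>a b s. \<Sum>k<n3. Psi $$ (k, s) * T a b k)"

definition front_slice :: "nat \<Rightarrow> nat \<Rightarrow> tensor \<Rightarrow> nat \<Rightarrow> real mat" where
  "front_slice n1 n2 T k = mat n1 n2 (\<lambda>(a, b). T a b k)"

definition diag_l :: "nat \<Rightarrow> (nat \<Rightarrow> real) \<Rightarrow> real mat" where
  "diag_l l s = mat l l (\<lambda>(i, j). if i = j then s i else 0)"

(* (thin) singular value decomposition Y = U diag(sigma) V^T of an n1 x n2 matrix,
   l = min n1 n2, with singular values listed in increasing order: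
   sigma 0 is the smallest singular value, sigma (l-1) the largest *)
definition is_svd :: "real mat \<Rightarrow> real mat \<Rightarrow> (nat \<Rightarrow> real) \<Rightarrow> real mat \<Rightarrow> bool" where
  "is_svd Y U sigma V \<longleftrightarrow>
     (let n1 = dim_row Y; n2 = dim_col Y; l = min n1 n2 in
        U \<in> carrier_mat n1 l \<and> V \<in> carrier_mat n2 l \<and>
        transpose_mat U * U = 1\<^sub>m l \<and> transpose_mat V * V = 1\<^sub>m l \<and>
        (\<forall>j<l. 0 \<le> sigma j) \<and> (\<forall>i j. i \<le> j \<and> j < l \<longrightarrow> sigma i \<le> sigma j) \<and>
        Y = U * diag_l l sigma * transpose_mat V)"

definition scalar_prox :: "real \<Rightarrow> real \<Rightarrow> real \<Rightarrow> real \<Rightarrow> bool" where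
  "scalar_prox c p s x \<longleftrightarrow> 0 \<le> x \<and>
     (\<forall>y\<ge>0. (1/2) * (x - s)\<^sup>2 + c * x powr p \<le> (1/2) * (y - s)\<^sup>2 + c * y powr p)"

(* Z is a possible value of S_{tau,w,p}(Y): Z = U diag(gamma_j) V^T for an SVD
   Y = U Sigma V^T, where gamma_j is a global minimizer of
   min_{x>=0} 1/2 (x - sigma_j(Y))^2 + tau w_j x^p *)
definition is_shrink :: "real \<Rightarrow> (nat \<Rightarrow> real) \<Rightarrow> real \<Rightarrow> real mat \<Rightarrow> real mat \<Rightarrow> bool" where
  "is_shrink tau w p Y Z \<longleftrightarrow>
     (\<exists>U sigma V gam. is_svd Y U sigma V \<and>
        (\<forall>j<min (dim_row Y) (dim_col Y). scalar_prox (tau * w j) p (sigma j) (gam j)) \<and>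
        Z = U * diag_l (min (dim_row Y) (dim_col Y)) gam * transpose_mat V)"

definition graph_feasible :: "nat \<Rightarrow> nat \<Rightarrow> tensor \<Rightarrow> bool" where
  "graph_feasible n m G \<longleftrightarrow>
     (\<forall>j<n. \<forall>i<m. \<forall>k<n. 0 \<le> G j i k) \<and> (\<forall>j<n. \<forall>i<m. (\<Sum>k<n. G j i k) = 1)"

definition graph_obj :: "nat \<Rightarrow> nat \<Rightarrow> real \<Rightarrow> real \<Rightarrow> real \<Rightarrow> real mat \<Rightarrow> (nat \<Rightarrow> real)
     \<Rightarrow> (nat \<times> nat \<times> nat) set \<Rightarrow> tensor \<Rightarrow> tensor \<Rightarrow> tensor \<Rightarrow> tensor \<Rightarrow> real" where
  "graph_obj n m lam gam rho A dl Om M Y C G =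
     lam * (\<Sum>i<m. dl i * trLap A (lat_slice n G i))
     + gam / 2 * (\<Sum>a<n. \<Sum>b<m. \<Sum>c<n. if (a, b, c) \<in> Om then (G a b c - M a b c)\<^sup>2 else 0)
     + rho / 2 * (\<Sum>a<n. \<Sum>b<m. \<Sum>c<n. (G a b c - Y a b c + C a b c / rho)\<^sup>2)"

definition view_obj :: "nat \<Rightarrow> nat \<Rightarrow> real \<Rightarrow> (nat \<Rightarrow> real mat) \<Rightarrow> (nat \<Rightarrow> real mat)
     \<Rightarrow> (nat \<Rightarrow> real) \<Rightarrow> tensor \<Rightarrow> real mat \<Rightarrow> (nat \<Rightarrow> real mat) \<Rightarrow> real" where
  "view_obj n m lam X P dl G A W = (\<Sum>i<m. dl i * fview lam (X i) (P i) A (W i) (lat_slice n G i))"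

end

theory Submission
  imports Defs "Jordan_Normal_Form.Determinant" "HOL-Analysis.L2_Norm"
begin

text \<open>
  Write \<open>B k = G (k+1) + C k / \<rho> k\<close>. Step (5) says \<open>C (k+1) = \<rho> k * (B k - Y (k+1))\<close>, and
  since \<open>[Phi, Phic]\<close> is orthogonal, the norm of the residual \<open>B k - Y (k+1)\<close> of step (4) is that
  of the singular value shrinkage residuals on the first \<open>r\<close> frontal slices, which is
  \<open>O(sqrt (\<mu> / \<rho> k))\<close>. As \<open>\<rho> k\<close> grows geometrically, this residual and \<open>C k / \<rho> k\<close> tend to 0,
  hence so does \<open>G (k+1) - Y (k+1) = (B k - Y (k+1)) - C k / \<rho> k\<close>.

  Comparing the objective of step (3) at \<open>G (k+1)\<close> with the feasible competitor \<open>G k\<close> gives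
  \<open>\<parallel>G (k+1) - T k\<parallel>\<^sup>2 \<le> \<parallel>G k - T k\<parallel>\<^sup>2 + O(1 / \<rho> k)\<close> for \<open>T k = Y k - C k / \<rho> k\<close>: the Laplacian term
  stays bounded thanks to the reweighting of step (2), and the fitting term because feasible
  graphs have entries in \<open>[0, 1]\<close>. Since \<open>G k - T k\<close> tends to 0, the increments of \<open>G\<close> vanish,
  and those of \<open>Y\<close> follow by the triangle inequality.
\<close>

section \<open>Frobenius norms of matrices and tensors\<close>

lemma tfro_eq_L2_set:
  "tfro n1 n2 n3 T = L2_set (\<lambda>(a, b, c). T a b c) ({..<n1} \<times> {..<n2} \<times> {..<n3})"
  unfolding tfro_def L2_set_def by (simp add: sum.cartesian_product case_prod_beta)

lemma tfro_nonneg: "0 \<le> tfro n1 n2 n3 T"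
  unfolding tfro_eq_L2_set by simp

lemma tfro_cong:
  assumes "\<And>a b c. a < n1 \<Longrightarrow> b < n2 \<Longrightarrow> c < n3 \<Longrightarrow> S a b c = T a b c"
  shows "tfro n1 n2 n3 S = tfro n1 n2 n3 T"
  unfolding tfro_def using assms by simp

lemma tfro_add_le:
  "tfro n1 n2 n3 (\<lambda>a b c. S a b c + T a b c) \<le> tfro n1 n2 n3 S + tfro n1 n2 n3 T"
  unfolding tfro_eq_L2_set
  using L2_set_triangle_ineq[of "\<lambda>(a, b, c). S a b c" "\<lambda>(a, b, c). T a b c"]
  by (simp add: split_def)

lemma tfro_scale: "tfro n1 n2 n3 (\<lambda>a b c. x * T a b c) = \<bar>x\<bar> * tfro n1 n2 n3 T"
  unfolding tfro_def
  by (simp add: power_mult_distrib real_sqrt_mult flip: sum_distrib_left)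

lemma tfro_diff_le:
  "tfro n1 n2 n3 (\<lambda>a b c. S a b c - T a b c) \<le> tfro n1 n2 n3 S + tfro n1 n2 n3 T"
  using tfro_add_le[of n1 n2 n3 S "\<lambda>a b c. - 1 * T a b c"] tfro_scale[of n1 n2 n3 "- 1" T]
  by simp

lemma tfro_tendsto_zeroI:
  assumes "\<forall>\<^sub>F k in sequentially. tfro n1 n2 n3 (T k) \<le> g k" and "g \<longlonglongrightarrow> 0"
  shows "(\<lambda>k. tfro n1 n2 n3 (T k)) \<longlonglongrightarrow> 0"
  by (rule tendsto_sandwich[OF _ assms(1) tendsto_const assms(2)]) (simp add: tfro_nonneg)

lemma tfro_sq_eq_sum_fro2_front_slice:
  "(tfro n1 n2 n3 T)\<^sup>2 = (\<Sum>s<n3. fro2 (front_slice n1 n2 T s))"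
proof -
  have "(tfro n1 n2 n3 T)\<^sup>2 = (\<Sum>a<n1. \<Sum>b<n2. \<Sum>c<n3. (T a b c)\<^sup>2)"
    unfolding tfro_def by (simp add: sum_nonneg)
  also have "\<dots> = (\<Sum>s<n3. \<Sum>a<n1. \<Sum>b<n2. (T a b s)\<^sup>2)"
    by (simp add: sum.swap[of _ "{..<n3}"])
  finally show ?thesis
    unfolding fro2_def front_slice_def by simp
qed

lemma sum_sq_orthonormal_cols:
  fixes Q :: "real mat"
  assumes Q: "Q \<in> carrier_mat n1 n2" and QtQ: "transpose_mat Q * Q = 1\<^sub>m n2"
  shows "(\<Sum>c<n1. (\<Sum>s<n2. Q $$ (c, s) * x s)\<^sup>2) = (\<Sum>s<n2. (x s)\<^sup>2)"
proof -
  have orth: "(\<Sum>c<n1. Q $$ (c, s) * Q $$ (c, s')) = (if s = s' then 1 else 0)"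
    if "s < n2" "s' < n2" for s s'
  proof -
    have "(transpose_mat Q * Q) $$ (s, s') = (\<Sum>c<n1. Q $$ (c, s) * Q $$ (c, s'))"
      using Q that by (simp add: scalar_prod_def lessThan_atLeast0)
    then show ?thesis using QtQ that by simp
  qed
  have "(\<Sum>c<n1. (\<Sum>s<n2. Q $$ (c, s) * x s)\<^sup>2)
      = (\<Sum>c<n1. \<Sum>s<n2. \<Sum>s'<n2. (Q $$ (c, s) * Q $$ (c, s')) * (x s * x s'))"
    by (simp add: power2_eq_square sum_product mult_ac)
  also have "\<dots> = (\<Sum>s<n2. \<Sum>s'<n2. (\<Sum>c<n1. Q $$ (c, s) * Q $$ (c, s')) * (x s * x s'))"
    by (simp add: sum.swap[of _ "{..<n1}"] sum_distrib_right)
  also have "\<dots> = (\<Sum>s<n2. \<Sum>s'<n2. if s = s' then x s * x s' else 0)"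
    by (intro sum.cong refl) (simp add: orth)
  finally show ?thesis by (simp add: power2_eq_square)
qed

lemma orthonormal_cols_imp_orthonormal_rows:
  fixes Q :: "'a :: field mat"
  assumes "Q \<in> carrier_mat n n" "transpose_mat Q * Q = 1\<^sub>m n"
  shows "Q * transpose_mat Q = 1\<^sub>m n"
  using mat_mult_left_right_inverse[of "transpose_mat Q" n Q] assms by simp

lemma fro2_nonneg: "0 \<le> fro2 K"
  unfolding fro2_def by (intro sum_nonneg) auto

lemma fro2_transpose: "fro2 (transpose_mat K) = fro2 K"
  unfolding fro2_def by (simp add: sum.swap[of _ "{..<dim_row K}"])

lemma fro2_mult_orthonormal_cols:
  assumes U: "U \<in> carrier_mat n1 l" and K: "K \<in> carrier_mat l n2"
    and UtU: "transpose_mat U * U = 1\<^sub>m l"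
  shows "fro2 (U * K) = fro2 K"
proof -
  have "fro2 (U * K) = (\<Sum>b<n2. \<Sum>a<n1. (\<Sum>j<l. U $$ (a, j) * K $$ (j, b))\<^sup>2)"
    unfolding fro2_def using U K
    by (simp add: scalar_prod_def atLeast0LessThan sum.swap[of _ "{..<n2}"])
  also have "\<dots> = (\<Sum>b<n2. \<Sum>j<l. (K $$ (j, b))\<^sup>2)"
    using sum_sq_orthonormal_cols[OF U UtU] by simp
  also have "\<dots> = fro2 K"
    unfolding fro2_def using K by (simp add: sum.swap[of _ "{..<n2}"])
  finally show ?thesis .
qed

lemma fro2_diag_l: "fro2 (diag_l l s) = (\<Sum>j<l. (s j)\<^sup>2)"
  unfolding fro2_def diag_l_def by (simp add: if_distrib[of "\<lambda>x. x\<^sup>2"] cong: if_cong)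

lemma fro2_svd_form:
  assumes U: "U \<in> carrier_mat n1 l" and V: "V \<in> carrier_mat n2 l"
    and UtU: "transpose_mat U * U = 1\<^sub>m l" and VtV: "transpose_mat V * V = 1\<^sub>m l"
  shows "fro2 (U * diag_l l s * transpose_mat V) = (\<Sum>j<l. (s j)\<^sup>2)"
proof -
  have D: "diag_l l s \<in> carrier_mat l l" unfolding diag_l_def by simp
  have "transpose_mat (diag_l l s) = diag_l l s"
    unfolding diag_l_def by (intro eq_matI) auto
  then have "transpose_mat (diag_l l s * transpose_mat V) = V * diag_l l s"
    using V D by (simp add: transpose_mult[OF D])
  then have "fro2 (diag_l l s * transpose_mat V) = fro2 (diag_l l s)"
    using fro2_transpose[of "diag_l l s * transpose_mat V"] fro2_mult_orthonormal_cols[OF V D VtV]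
    by simp
  moreover have "fro2 (U * diag_l l s * transpose_mat V) = fro2 (diag_l l s * transpose_mat V)"
    using U V D fro2_mult_orthonormal_cols[OF U _ UtU, of "diag_l l s * transpose_mat V" n2]
    by simp
  ultimately show ?thesis by (simp add: fro2_diag_l)
qed

section \<open>Mode-3 products\<close>

lemma mode3_cong:
  "(\<And>c. c < n3 \<Longrightarrow> S a b c = T a b c) \<Longrightarrow> mode3 n3 S Psi a b s = mode3 n3 T Psi a b s"
  unfolding mode3_def by simp

lemma mode3_diff:
  "mode3 n3 (\<lambda>a b c. S a b c - T a b c) Psi a b s = mode3 n3 S Psi a b s - mode3 n3 T Psi a b s"
  unfolding mode3_def by (simp add: right_diff_distrib sum_subtractf)

lemma mode3_mode3:
  assumes "R \<in> carrier_mat n3 k" "S \<in> carrier_mat k l" "s < l"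
  shows "mode3 k (mode3 n3 T R) S a b s = mode3 n3 T (R * S) a b s"
  using assms unfolding mode3_def
  by (simp add: scalar_prod_def atLeast0LessThan sum_distrib_left sum_distrib_right
      sum.swap[of _ "{..<k}"] mult_ac)

lemma mode3_one: "c < n3 \<Longrightarrow> mode3 n3 T (1\<^sub>m n3) a b c = T a b c"
  unfolding mode3_def by (simp add: if_distrib[of "\<lambda>x. x * _"] cong: if_cong)

lemma tfro_mode3_orthogonal:
  assumes Q: "Q \<in> carrier_mat n n" and QtQ: "transpose_mat Q * Q = 1\<^sub>m n"
  shows "tfro n1 n2 n (mode3 n T Q) = tfro n1 n2 n T"
proof -
  have Qt: "transpose_mat Q \<in> carrier_mat n n" using Q by simp
  have "transpose_mat (transpose_mat Q) * transpose_mat Q = 1\<^sub>m n"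
    using orthonormal_cols_imp_orthonormal_rows[OF Q QtQ] by simp
  from sum_sq_orthonormal_cols[OF Qt this]
  have "(\<Sum>s<n. (mode3 n T Q a b s)\<^sup>2) = (\<Sum>c<n. (T a b c)\<^sup>2)" for a b
    using Q unfolding mode3_def by (simp add: mult.commute)
  then show ?thesis unfolding tfro_def by simp
qed

section \<open>Singular value shrinkage\<close>

lemma powr_add_le:
  fixes a b p :: real
  assumes "0 \<le> a" "0 \<le> b" "0 < p" "p \<le> 1"
  shows "(a + b) powr p \<le> a powr p + b powr p"
proof (cases "a = 0 \<or> b = 0")
  case False
  then have a: "0 < a" and b: "0 < b" using assms by auto
  have split: "x powr p = x * x powr (p - 1)" if "0 < x" for x :: real
    using that powr_add[of x 1 "p - 1"] by simp
  have "(a + b) powr p = a * (a + b) powr (p - 1) + b * (a + b) powr (p - 1)"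
    using split[of "a + b"] a b by (simp add: distrib_right)
  also have "\<dots> \<le> a * a powr (p - 1) + b * b powr (p - 1)"
    using a b assms by (intro add_mono mult_left_mono powr_mono2') auto
  finally show ?thesis using split a b by simp
qed auto

lemma sq_le_mult_powr_imp_le:
  fixes c p y :: real
  assumes y: "0 < y" and c: "0 \<le> c" and p: "0 < p" "p \<le> 1"
    and le: "y\<^sup>2 \<le> 2 * c * y powr p"
  shows "y\<^sup>2 \<le> 2 * c + 4 * c\<^sup>2"
proof (cases "y \<le> 1")
  case True
  then have "y powr p \<le> 1" using y p by (intro powr_le1) auto
  then have "2 * c * y powr p \<le> 2 * c" using c by (simp add: mult_left_le)
  then show ?thesis using le c by (simp add: add_increasing2)
next
  case False
  then have "y powr p \<le> y" using p powr_mono[of p 1 y] by simp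
  then have "2 * c * y powr p \<le> 2 * c * y" using c by (simp add: mult_left_mono)
  then have "y * y \<le> 2 * c * y" using le by (simp add: power2_eq_square)
  then have "y \<le> 2 * c" using y by (simp add: mult_right_le_imp_le)
  then have "y\<^sup>2 \<le> (2 * c)\<^sup>2" using y by (intro power_mono) auto
  then show ?thesis using c by (simp add: power_mult_distrib)
qed

lemma scalar_prox_dist_sq_le:
  fixes c p s x :: real
  assumes c: "0 \<le> c" and s: "0 \<le> s" and p: "0 < p" "p \<le> 1"
    and prox: "scalar_prox c p s x"
  shows "(x - s)\<^sup>2 \<le> 2 * c + 4 * c\<^sup>2"
proof -
  have x: "0 \<le> x" and opt: "(1/2) * (x - s)\<^sup>2 + c * x powr p \<le> c * s powr p"
    using prox s unfolding scalar_prox_def by auto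
  show ?thesis
  proof (cases "s \<le> x")
    case True
    then have "c * s powr p \<le> c * x powr p"
      using c s p by (intro mult_left_mono powr_mono2) auto
    then have "(x - s)\<^sup>2 \<le> 0" using opt by linarith
    moreover have "0 \<le> 2 * c + 4 * c\<^sup>2" using c by simp
    ultimately show ?thesis by linarith
  next
    case False
    define y where "y = s - x"
    have y: "0 < y" using False y_def by simp
    have "s powr p \<le> x powr p + y powr p"
      using powr_add_le[of x y p] x y p unfolding y_def by simp
    then have "c * s powr p \<le> c * x powr p + c * y powr p"
      using c by (metis distrib_left mult_left_mono)
    moreover have "(x - s)\<^sup>2 = y\<^sup>2" unfolding y_def by (simp add: power2_commute)
    ultimately have "y\<^sup>2 \<le> 2 * c * y powr p" using opt by linarith
    with sq_le_mult_powr_imp_le[OF y c p] show ?thesis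
      using \<open>(x - s)\<^sup>2 = y\<^sup>2\<close> by simp
  qed
qed

lemma is_shrink_fro2_diff_le:
  assumes shrink: "is_shrink tau w p Y Z" and Y: "Y \<in> carrier_mat n1 n2"
    and tau: "0 \<le> tau" and p: "0 < p" "p \<le> 1"
    and w: "\<And>j. j < min n1 n2 \<Longrightarrow> 0 \<le> w j \<and> w j \<le> wmax"
  shows "fro2 (Y - Z) \<le> real (min n1 n2) * (2 * (tau * wmax) + 4 * (tau * wmax)\<^sup>2)"
proof -
  define l where "l = min n1 n2"
  obtain U sigma V gam where svd: "is_svd Y U sigma V"
    and prox: "\<forall>j<l. scalar_prox (tau * w j) p (sigma j) (gam j)"
    and Z: "Z = U * diag_l l gam * transpose_mat V"
    using shrink Y unfolding is_shrink_def l_def by auto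
  have U: "U \<in> carrier_mat n1 l" and V: "V \<in> carrier_mat n2 l"
    and UtU: "transpose_mat U * U = 1\<^sub>m l" and VtV: "transpose_mat V * V = 1\<^sub>m l"
    and sigma: "\<forall>j<l. 0 \<le> sigma j" and Y_eq: "Y = U * diag_l l sigma * transpose_mat V"
    using svd Y unfolding is_svd_def l_def Let_def by auto
  have D: "diag_l l f \<in> carrier_mat l l" for f unfolding diag_l_def by simp
  have "Y - Z = (U * diag_l l sigma - U * diag_l l gam) * transpose_mat V"
    using minus_mult_distrib_mat[of "U * diag_l l sigma" n1 l "U * diag_l l gam" "transpose_mat V" n2]
      U V D by (simp add: Y_eq Z)
  also have "\<dots> = U * (diag_l l sigma - diag_l l gam) * transpose_mat V"
    using mult_minus_distrib_mat[OF U D D] by simp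
  also have "diag_l l sigma - diag_l l gam = diag_l l (\<lambda>j. sigma j - gam j)"
    unfolding diag_l_def by (intro eq_matI) auto
  finally have "Y - Z = U * diag_l l (\<lambda>j. sigma j - gam j) * transpose_mat V" .
  then have "fro2 (Y - Z) = (\<Sum>j<l. (sigma j - gam j)\<^sup>2)"
    using fro2_svd_form[OF U V UtU VtV] by simp
  also have "\<dots> \<le> (\<Sum>j<l. 2 * (tau * wmax) + 4 * (tau * wmax)\<^sup>2)"
  proof (rule sum_mono)
    fix j assume "j \<in> {..<l}"
    then have j: "j < l" by simp
    have "(gam j - sigma j)\<^sup>2 \<le> 2 * (tau * w j) + 4 * (tau * w j)\<^sup>2"
      using scalar_prox_dist_sq_le prox sigma j tau w[of j] p unfolding l_def by simp
    also have "\<dots> \<le> 2 * (tau * wmax) + 4 * (tau * wmax)\<^sup>2"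
      using w[of j] j tau unfolding l_def
      by (intro add_mono mult_left_mono power_mono) auto
    finally show "(sigma j - gam j)\<^sup>2 \<le> 2 * (tau * wmax) + 4 * (tau * wmax)\<^sup>2"
      by (simp add: power2_commute)
  qed
  finally show ?thesis unfolding l_def by simp
qed

lemma tfro_diff_mode3_transpose:
  assumes Q: "Q \<in> carrier_mat n n" and QtQ: "transpose_mat Q * Q = 1\<^sub>m n"
    and Y': "\<forall>a<n1. \<forall>b<n2. \<forall>c<n. Y' a b c = mode3 n Z (transpose_mat Q) a b c"
  shows "tfro n1 n2 n (\<lambda>a b c. B a b c - Y' a b c)
    = tfro n1 n2 n (\<lambda>a b s. mode3 n B Q a b s - Z a b s)"
proof -
  have Y'_Q: "mode3 n Y' Q a b s = Z a b s" if "a < n1" "b < n2" "s < n" for a b s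
  proof -
    have "mode3 n Y' Q a b s = mode3 n (mode3 n Z (transpose_mat Q)) Q a b s"
      using Y' that by (intro mode3_cong) auto
    also have "\<dots> = mode3 n Z (transpose_mat Q * Q) a b s"
      using Q that by (intro mode3_mode3) auto
    finally show ?thesis using QtQ mode3_one that by simp
  qed
  have "tfro n1 n2 n (\<lambda>a b c. B a b c - Y' a b c)
      = tfro n1 n2 n (mode3 n (\<lambda>a b c. B a b c - Y' a b c) Q)"
    using tfro_mode3_orthogonal[OF Q QtQ] by simp
  also have "\<dots> = tfro n1 n2 n (\<lambda>a b s. mode3 n B Q a b s - Z a b s)"
    by (intro tfro_cong) (simp add: mode3_diff Y'_Q)
  finally show ?thesis .
qed

text \<open>In the frame of \<open>Q = [Phi, Phic]\<close> the residual \<open>B - Y'\<close> vanishes on the frontal slices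
  \<open>s \<ge> r\<close>, and on the first \<open>r\<close> slices it is the residual of a singular value shrinkage.\<close>

lemma shrinkage_step_residual_le:
  fixes B Z Y' :: tensor
  assumes Q: "Q \<in> carrier_mat n n" and QtQ: "transpose_mat Q * Q = 1\<^sub>m n" and r: "r \<le> n"
    and Q_Phi: "\<And>c s. c < n \<Longrightarrow> s < r \<Longrightarrow> Q $$ (c, s) = Phi $$ (c, s)"
    and Q_Phic: "\<And>c s. c < n \<Longrightarrow> r \<le> s \<Longrightarrow> s < n \<Longrightarrow> Q $$ (c, s) = Phic $$ (c, s - r)"
    and shrink: "\<forall>s<r. is_shrink tau w p (front_slice n1 n2 (mode3 n B Phi) s) (front_slice n1 n2 Z s)"
    and kept: "\<forall>a<n1. \<forall>b<n2. \<forall>s. r \<le> s \<and> s < n \<longrightarrow> Z a b s = mode3 n B Phic a b (s - r)"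
    and Y': "\<forall>a<n1. \<forall>b<n2. \<forall>c<n. Y' a b c = mode3 n Z (transpose_mat Q) a b c"
    and tau: "0 \<le> tau" and p: "0 < p" "p \<le> 1"
    and w: "\<And>j. j < min n1 n2 \<Longrightarrow> 0 \<le> w j \<and> w j \<le> wmax"
  shows "(tfro n1 n2 n (\<lambda>a b c. B a b c - Y' a b c))\<^sup>2
    \<le> real r * real (min n1 n2) * (2 * (tau * wmax) + 4 * (tau * wmax)\<^sup>2)"
proof -
  define D where "D a b s = mode3 n B Q a b s - Z a b s" for a b s
  have "(tfro n1 n2 n (\<lambda>a b c. B a b c - Y' a b c))\<^sup>2 = (\<Sum>s<n. fro2 (front_slice n1 n2 D s))"
    unfolding tfro_diff_mode3_transpose[OF Q QtQ Y'] D_def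
    by (simp add: tfro_sq_eq_sum_fro2_front_slice)
  also have "\<dots> = (\<Sum>s<r. fro2 (front_slice n1 n2 D s))"
  proof (rule sum.mono_neutral_right)
    show "\<forall>s\<in>{..<n} - {..<r}. fro2 (front_slice n1 n2 D s) = 0"
    proof
      fix s assume "s \<in> {..<n} - {..<r}"
      then have s: "r \<le> s" "s < n" by auto
      then have "mode3 n B Q a b s = mode3 n B Phic a b (s - r)" for a b
        unfolding mode3_def using Q_Phic by simp
      then have "D a b s = 0" if "a < n1" "b < n2" for a b
        unfolding D_def using kept that s by simp
      then show "fro2 (front_slice n1 n2 D s) = 0"
        unfolding fro2_def front_slice_def by simp
    qed
  qed (use r in auto)
  also have "\<dots> = (\<Sum>s<r. fro2 (front_slice n1 n2 (mode3 n B Phi) s - front_slice n1 n2 Z s))"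
  proof (intro sum.cong refl arg_cong[where f = fro2])
    fix s assume "s \<in> {..<r}"
    then have "mode3 n B Q a b s = mode3 n B Phi a b s" for a b
      unfolding mode3_def using Q_Phi by simp
    then show "front_slice n1 n2 D s = front_slice n1 n2 (mode3 n B Phi) s - front_slice n1 n2 Z s"
      unfolding front_slice_def D_def by (intro eq_matI) auto
  qed
  also have "\<dots> \<le> (\<Sum>s<r. real (min n1 n2) * (2 * (tau * wmax) + 4 * (tau * wmax)\<^sup>2))"
    using shrink tau p w
    by (intro sum_mono is_shrink_fro2_diff_le[where w = w and p = p]) (auto simp: front_slice_def)
  finally show ?thesis by simp
qed

section \<open>The graph update\<close>

lemma graph_feasible_entry_bounds:
  assumes "graph_feasible n m G" "j < n" "i < m" "k < n"
  shows "0 \<le> G j i k \<and> G j i k \<le> 1"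
proof -
  have nonneg: "\<forall>k'<n. 0 \<le> G j i k'" and row: "(\<Sum>k'<n. G j i k') = 1"
    using assms unfolding graph_feasible_def by auto
  have "G j i k \<le> (\<Sum>k'<n. G j i k')"
    using assms nonneg by (intro member_le_sum) auto
  then show ?thesis using row nonneg assms by auto
qed

lemma trLap_lat_slice_nonneg:
  assumes "graph_feasible n m G" "i < m" "A \<in> carrier_mat d n"
  shows "0 \<le> trLap A (lat_slice n G i)"
  unfolding trLap_def lat_slice_def
  using assms graph_feasible_entry_bounds[OF assms(1) _ assms(2)]
  by (intro mult_nonneg_nonneg sum_nonneg) auto

lemma sum_sq_orthonormal_rows:
  assumes A: "A \<in> carrier_mat d n" and AAt: "A * transpose_mat A = 1\<^sub>m d"
  shows "(\<Sum>j<n. \<Sum>t<d. (A $$ (t, j))\<^sup>2) = real d"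
proof -
  have "(\<Sum>j<n. (A $$ (t, j))\<^sup>2) = 1" if "t < d" for t
  proof -
    have "(A * transpose_mat A) $$ (t, t) = (\<Sum>j<n. (A $$ (t, j))\<^sup>2)"
      using A that by (simp add: scalar_prod_def atLeast0LessThan power2_eq_square)
    then show ?thesis using AAt that by simp
  qed
  then have "(\<Sum>t<d. \<Sum>j<n. (A $$ (t, j))\<^sup>2) = real d" by simp
  then show ?thesis by (simp add: sum.swap[of _ "{..<n}"])
qed

lemma trLap_lat_slice_le:
  assumes G: "graph_feasible n m G" and i: "i < m"
    and A: "A \<in> carrier_mat d n" and AAt: "A * transpose_mat A = 1\<^sub>m d"
  shows "trLap A (lat_slice n G i) \<le> 2 * real n * real d"
proof -
  have "trLap A (lat_slice n G i)
      = (1/2) * (\<Sum>j<n. \<Sum>k<n. G j i k * (\<Sum>t<d. (A $$ (t, j) - A $$ (t, k))\<^sup>2))"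
    unfolding trLap_def lat_slice_def using A by simp
  also have "\<dots> \<le> (1/2) * (\<Sum>j<n. \<Sum>k<n. \<Sum>t<d. 2 * (A $$ (t, j))\<^sup>2 + 2 * (A $$ (t, k))\<^sup>2)"
  proof (intro mult_left_mono sum_mono)
    fix j k assume jk: "j \<in> {..<n}" "k \<in> {..<n}"
    have "(u - v)\<^sup>2 \<le> 2 * u\<^sup>2 + 2 * v\<^sup>2" for u v :: real
      using zero_le_power2[of "u + v"] by (simp add: power2_eq_square algebra_simps)
    then have "(\<Sum>t<d. (A $$ (t, j) - A $$ (t, k))\<^sup>2)
        \<le> (\<Sum>t<d. 2 * (A $$ (t, j))\<^sup>2 + 2 * (A $$ (t, k))\<^sup>2)"
      by (intro sum_mono)
    moreover have "0 \<le> G j i k" "G j i k \<le> 1"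
      using graph_feasible_entry_bounds[OF G _ i] jk by auto
    ultimately show "G j i k * (\<Sum>t<d. (A $$ (t, j) - A $$ (t, k))\<^sup>2)
        \<le> (\<Sum>t<d. 2 * (A $$ (t, j))\<^sup>2 + 2 * (A $$ (t, k))\<^sup>2)"
      by (meson mult_left_le_one_le order_trans sum_nonneg zero_le_power2)
  qed simp
  also have "\<dots> = real n * (\<Sum>j<n. \<Sum>t<d. (A $$ (t, j))\<^sup>2) + real n * (\<Sum>k<n. \<Sum>t<d. (A $$ (t, k))\<^sup>2)"
    by (simp add: sum.distrib sum_distrib_left sum.swap[of _ "{..<n}" "{..<d}"])
  finally show ?thesis using sum_sq_orthonormal_rows[OF A AAt] by (simp add: mult_ac)
qed

lemma div_sqrt_add_le_sqrt:
  fixes F x :: real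
  assumes "0 \<le> F" "0 \<le> x"
  shows "x / sqrt (F + x) \<le> sqrt x"
proof (cases "x = 0")
  case False
  then have "0 < sqrt x" using assms by simp
  moreover have "sqrt x \<le> sqrt (F + x)" using assms by simp
  ultimately have "x / sqrt (F + x) \<le> x / sqrt x"
    using assms by (intro divide_left_mono) auto
  then show ?thesis using assms by (simp add: real_div_sqrt)
qed simp

lemma reweighted_term_le:
  fixes lam F t N :: real
  assumes lam: "0 < lam" and F: "0 \<le> F" and t: "0 \<le> t" "t \<le> T" and N: "0 \<le> N" "N \<le> Nmax"
  shows "lam * (N / sqrt (F + lam * t) * t) \<le> Nmax * sqrt (lam * T)"
proof -
  have "lam * (N / sqrt (F + lam * t) * t) = N * (lam * t / sqrt (F + lam * t))" by simp
  also have "\<dots> \<le> N * sqrt (lam * t)"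
    using lam F t N by (intro mult_left_mono div_sqrt_add_le_sqrt) auto
  also have "\<dots> \<le> Nmax * sqrt (lam * T)"
    using lam t N by (intro mult_mono) auto
  finally show ?thesis .
qed

lemma graph_obj_le_imp_dist_sq_le:
  assumes descent: "graph_obj n m lam gam rho A dl Om M Y C G1 \<le> graph_obj n m lam gam rho A dl Om M Y C G0"
    and G0: "graph_feasible n m G0" and rho: "0 < rho" and gam: "0 \<le> gam"
    and lap1: "0 \<le> lam * (\<Sum>i<m. dl i * trLap A (lat_slice n G1 i))"
    and lap0: "lam * (\<Sum>i<m. dl i * trLap A (lat_slice n G0 i)) \<le> L"
  shows "(tfro n m n (\<lambda>a b c. G1 a b c - (Y a b c - C a b c / rho)))\<^sup>2
    \<le> (tfro n m n (\<lambda>a b c. G0 a b c - (Y a b c - C a b c / rho)))\<^sup>2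
      + 2 * (L + gam / 2 * (\<Sum>a<n. \<Sum>b<m. \<Sum>c<n. (1 + \<bar>M a b c\<bar>)\<^sup>2)) / rho"
proof -
  define fit where "fit G = (\<Sum>a<n. \<Sum>b<m. \<Sum>c<n. if (a, b, c) \<in> Om then (G a b c - M a b c)\<^sup>2 else 0)"
    for G :: tensor
  define dist where "dist G = tfro n m n (\<lambda>a b c. G a b c - (Y a b c - C a b c / rho))" for G :: tensor
  have obj: "graph_obj n m lam gam rho A dl Om M Y C G
      = lam * (\<Sum>i<m. dl i * trLap A (lat_slice n G i)) + gam / 2 * fit G + rho / 2 * (dist G)\<^sup>2"
    for G
    unfolding graph_obj_def fit_def dist_def tfro_def by (simp add: sum_nonneg algebra_simps)
  have "fit G0 \<le> (\<Sum>a<n. \<Sum>b<m. \<Sum>c<n. (1 + \<bar>M a b c\<bar>)\<^sup>2)"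
    unfolding fit_def
  proof (intro sum_mono)
    fix a b c assume "a \<in> {..<n}" "b \<in> {..<m}" "c \<in> {..<n}"
    then have "\<bar>G0 a b c - M a b c\<bar> \<le> 1 + \<bar>M a b c\<bar>"
      using graph_feasible_entry_bounds[OF G0] by fastforce
    then have "(G0 a b c - M a b c)\<^sup>2 \<le> (1 + \<bar>M a b c\<bar>)\<^sup>2"
      by (metis abs_ge_zero power2_abs power_mono)
    then show "(if (a, b, c) \<in> Om then (G0 a b c - M a b c)\<^sup>2 else 0) \<le> (1 + \<bar>M a b c\<bar>)\<^sup>2"
      by auto
  qed
  then have "gam / 2 * fit G0 \<le> gam / 2 * (\<Sum>a<n. \<Sum>b<m. \<Sum>c<n. (1 + \<bar>M a b c\<bar>)\<^sup>2)"
    using gam by (intro mult_left_mono) auto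
  moreover have "0 \<le> gam / 2 * fit G1"
    unfolding fit_def using gam by (intro mult_nonneg_nonneg sum_nonneg) auto
  ultimately have "rho / 2 * (dist G1)\<^sup>2
      \<le> L + gam / 2 * (\<Sum>a<n. \<Sum>b<m. \<Sum>c<n. (1 + \<bar>M a b c\<bar>)\<^sup>2) + rho / 2 * (dist G0)\<^sup>2"
    using descent lap0 lap1 unfolding obj by linarith
  then show ?thesis using rho unfolding dist_def by (simp add: field_simps)
qed

section \<open>Convergence of the iteration\<close>

text \<open>The locale keeps only the hypotheses of the theorem that the argument uses.\<close>

locale multiview_iteration =
  fixes n m d r :: nat
    and X P :: "nat \<Rightarrow> real mat"
    and pres :: "nat \<Rightarrow> nat \<Rightarrow> bool"
    and M :: tensor
    and Om :: "(nat \<times> nat \<times> nat) set"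
    and lam mu gam p :: real
    and w :: "nat \<Rightarrow> real"
    and Phi Phic :: "real mat"
    and A :: "nat \<Rightarrow> real mat"
    and W :: "nat \<Rightarrow> nat \<Rightarrow> real mat"
    and dl :: "nat \<Rightarrow> nat \<Rightarrow> real"
    and rho :: "nat \<Rightarrow> real"
    and G Y C :: "nat \<Rightarrow> tensor"
  assumes params: "lam > 0" "mu > 0" "gam > 0" "0 < p" "p \<le> 1"
    and w_mono: "\<And>i j. i \<le> j \<Longrightarrow> j < min n m \<Longrightarrow> w j \<le> w i"
    and w_nonneg: "\<And>j. j < min n m \<Longrightarrow> 0 \<le> w j"
    and r_le: "r \<le> n"
    and Phibar_orth: "transpose_mat (mat n n (\<lambda>(a, b). if b < r then Phi $$ (a, b) else Phic $$ (a, b - r)))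
                       * mat n n (\<lambda>(a, b). if b < r then Phi $$ (a, b) else Phic $$ (a, b - r)) = 1\<^sub>m n"
    and init_rho: "rho 0 = 1 / 10000"
    and step1_A: "\<And>k. A (Suc k) \<in> carrier_mat d n \<and> A (Suc k) * transpose_mat (A (Suc k)) = 1\<^sub>m d"
    and step2: "\<And>k i. i < m \<Longrightarrow>
        dl (Suc k) i = real (card {j. j < n \<and> pres i j})
          / sqrt (fview lam (X i) (P i) (A (Suc k)) (W (Suc k) i) (lat_slice n (G k) i))"
    and step3_feas: "\<And>k. graph_feasible n m (G (Suc k))"
    and step3_min: "\<And>k G'. graph_feasible n m G' \<Longrightarrow>
        graph_obj n m lam gam (rho k) (A (Suc k)) (dl (Suc k)) Om M (Y k) (C k) (G (Suc k))
          \<le> graph_obj n m lam gam (rho k) (A (Suc k)) (dl (Suc k)) Om M (Y k) (C k) G'"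
    and step4: "\<And>k. \<exists>Z :: tensor.
        (\<forall>s<r. is_shrink (mu / rho k) w p
            (front_slice n m (mode3 n (\<lambda>a b c. G (Suc k) a b c + C k a b c / rho k) Phi) s)
            (front_slice n m Z s)) \<and>
        (\<forall>a<n. \<forall>b<m. \<forall>s. r \<le> s \<and> s < n \<longrightarrow>
            Z a b s = mode3 n (\<lambda>a b c. G (Suc k) a b c + C k a b c / rho k) Phic a b (s - r)) \<and>
        (\<forall>a<n. \<forall>b<m. \<forall>c<n. Y (Suc k) a b c =
            mode3 n Z (transpose_mat (mat n n (\<lambda>(a, b). if b < r then Phi $$ (a, b) else Phic $$ (a, b - r)))) a b c)"
    and step5: "\<And>k a b c. a < n \<Longrightarrow> b < m \<Longrightarrow> c < n \<Longrightarrow>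
        C (Suc k) a b c = C k a b c + rho k * (G (Suc k) a b c - Y (Suc k) a b c)"
    and step6: "\<And>k. rho (Suc k) = 11 / 10 * rho k"
begin

lemma rho_eq: "rho k = (11/10) ^ k / 10000"
  by (induction k) (simp_all add: init_rho step6)

lemma rho_pos: "0 < rho k"
  unfolding rho_eq by simp

lemma inverse_rho_tendsto_zero: "(\<lambda>k. 1 / rho k) \<longlonglongrightarrow> 0"
proof -
  have "(\<lambda>k. 10000 * (10/11) ^ k :: real) \<longlonglongrightarrow> 0"
    by (intro tendsto_mult_right_zero LIMSEQ_power_zero) simp
  then show ?thesis unfolding rho_eq by (simp add: power_divide mult.commute)
qed

definition residual :: "nat \<Rightarrow> tensor" where
  "residual k = (\<lambda>a b c. G (Suc k) a b c + C k a b c / rho k - Y (Suc k) a b c)"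

lemma residual_sq_le:
  "(tfro n m n (residual k))\<^sup>2
    \<le> real r * real (min n m) * (2 * (mu / rho k * w 0) + 4 * (mu / rho k * w 0)\<^sup>2)"
proof -
  have "0 \<le> w j \<and> w j \<le> w 0" if "j < min n m" for j
    using w_nonneg w_mono[of 0 j] that by auto
  with step4[of k] show ?thesis
    unfolding residual_def using r_le rho_pos[of k] params
    by (elim exE conjE, intro shrinkage_step_residual_le[OF _ Phibar_orth, where Phi = Phi and Phic = Phic])
      (auto intro: less_imp_le)
qed

lemma residual_tendsto_zero: "(\<lambda>k. tfro n m n (residual k)) \<longlonglongrightarrow> 0"
proof (rule tfro_tendsto_zeroI)
  let ?bound = "\<lambda>k. real r * real (min n m) * (2 * (mu / rho k * w 0) + 4 * (mu / rho k * w 0)\<^sup>2)"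
  show "\<forall>\<^sub>F k in sequentially. tfro n m n (residual k) \<le> sqrt (?bound k)"
    using residual_sq_le real_sqrt_le_mono[of "(tfro n m n (residual _))\<^sup>2"]
    by (simp add: tfro_nonneg)
  have "(\<lambda>k. mu / rho k) \<longlonglongrightarrow> 0"
    using tendsto_mult_right_zero[OF inverse_rho_tendsto_zero, of mu] by simp
  then have "(\<lambda>k. sqrt (?bound k)) \<longlonglongrightarrow> sqrt (real r * real (min n m) * (2 * (0 * w 0) + 4 * (0 * w 0)\<^sup>2))"
    by (intro tendsto_intros)
  then show "(\<lambda>k. sqrt (?bound k)) \<longlonglongrightarrow> 0" by simp
qed

lemma dual_eq_rho_residual:
  "a < n \<Longrightarrow> b < m \<Longrightarrow> c < n \<Longrightarrow> C (Suc k) a b c = rho k * residual k a b c"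
  unfolding residual_def using step5 rho_pos[of k] by (simp add: algebra_simps)

lemma scaled_dual_tendsto_zero: "(\<lambda>k. tfro n m n (\<lambda>a b c. C k a b c / rho k)) \<longlonglongrightarrow> 0"
proof (rule LIMSEQ_imp_Suc)
  have scaled: "tfro n m n (\<lambda>a b c. C (Suc k) a b c / rho (Suc k)) = 10/11 * tfro n m n (residual k)"
    for k
  proof -
    have "tfro n m n (\<lambda>a b c. C (Suc k) a b c / rho (Suc k))
        = tfro n m n (\<lambda>a b c. 10/11 * residual k a b c)"
      using rho_pos[of k] by (intro tfro_cong) (simp add: dual_eq_rho_residual step6)
    then show ?thesis using tfro_scale[of n m n "10/11" "residual k"] by simp
  qed
  show "(\<lambda>k. tfro n m n (\<lambda>a b c. C (Suc k) a b c / rho (Suc k))) \<longlonglongrightarrow> 0"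
    unfolding scaled by (rule tendsto_mult_right_zero[OF residual_tendsto_zero])
qed

lemma primal_residual_tendsto_zero: "(\<lambda>k. tfro n m n (\<lambda>a b c. G k a b c - Y k a b c)) \<longlonglongrightarrow> 0"
proof (rule LIMSEQ_imp_Suc, rule tfro_tendsto_zeroI)
  have "tfro n m n (\<lambda>a b c. G (Suc k) a b c - Y (Suc k) a b c)
      = tfro n m n (\<lambda>a b c. residual k a b c - C k a b c / rho k)" for k
    unfolding residual_def by (intro tfro_cong) simp
  then show "\<forall>\<^sub>F k in sequentially. tfro n m n (\<lambda>a b c. G (Suc k) a b c - Y (Suc k) a b c)
      \<le> tfro n m n (residual k) + tfro n m n (\<lambda>a b c. C k a b c / rho k)"
    by (simp add: tfro_diff_le)
  show "(\<lambda>k. tfro n m n (residual k) + tfro n m n (\<lambda>a b c. C k a b c / rho k)) \<longlonglongrightarrow> 0"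
    using tendsto_add_zero[OF residual_tendsto_zero scaled_dual_tendsto_zero] .
qed

text \<open>The reweighting of step (2) is what keeps the Laplacian term of step (3) bounded. Only \<open>k > 0\<close>
  is covered: \<open>G 0 = M\<close> need not be feasible, and then \<open>dl 1\<close> may even be negative.\<close>

lemma reweighted_laplacian_bounds:
  assumes "0 < k"
  shows "0 \<le> lam * (\<Sum>i<m. dl (Suc k) i * trLap (A (Suc k)) (lat_slice n (G (Suc k)) i))"
    and "lam * (\<Sum>i<m. dl (Suc k) i * trLap (A (Suc k)) (lat_slice n (G k) i))
      \<le> real m * (real n * sqrt (lam * (2 * real n * real d)))"
proof -
  have feas: "graph_feasible n m (G k)" "graph_feasible n m (G (Suc k))"
    using assms step3_feas by (metis Suc_pred)+
  have A: "A (Suc k) \<in> carrier_mat d n" "A (Suc k) * transpose_mat (A (Suc k)) = 1\<^sub>m d"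
    using step1_A by auto
  define N where "N i = real (card {j. j < n \<and> pres i j})" for i
  define F where "F i = fro2 ((A (Suc k) - transpose_mat (W (Suc k) i) * X i) * P i)" for i
  define t where "t i = trLap (A (Suc k)) (lat_slice n (G k) i)" for i
  have dl: "dl (Suc k) i = N i / sqrt (F i + lam * t i)" if "i < m" for i
    using step2[OF that] unfolding fview_def N_def F_def t_def .
  have N: "0 \<le> N i" "N i \<le> real n" for i
    unfolding N_def using card_mono[of "{..<n}" "{j. j < n \<and> pres i j}"] by auto
  have F: "0 \<le> F i" for i unfolding F_def by (rule fro2_nonneg)
  have t: "0 \<le> t i" "t i \<le> 2 * real n * real d" if "i < m" for i
    unfolding t_def using trLap_lat_slice_nonneg[OF feas(1) that A(1)]
      trLap_lat_slice_le[OF feas(1) that A] by auto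
  have "0 \<le> dl (Suc k) i" if "i < m" for i
    using dl[OF that] N F t[OF that] params(1) by simp
  then show "0 \<le> lam * (\<Sum>i<m. dl (Suc k) i * trLap (A (Suc k)) (lat_slice n (G (Suc k)) i))"
    using params(1) trLap_lat_slice_nonneg[OF feas(2) _ A(1)]
    by (intro mult_nonneg_nonneg sum_nonneg) auto
  have "(\<Sum>i<m. lam * (dl (Suc k) i * t i)) \<le> (\<Sum>i<m. real n * sqrt (lam * (2 * real n * real d)))"
  proof (rule sum_mono)
    fix i assume "i \<in> {..<m}"
    then have i: "i < m" by simp
    show "lam * (dl (Suc k) i * t i) \<le> real n * sqrt (lam * (2 * real n * real d))"
      unfolding dl[OF i] by (rule reweighted_term_le[OF params(1) F t[OF i] N])
  qed
  then show "lam * (\<Sum>i<m. dl (Suc k) i * trLap (A (Suc k)) (lat_slice n (G k) i))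
      \<le> real m * (real n * sqrt (lam * (2 * real n * real d)))"
    unfolding t_def by (simp add: sum_distrib_left)
qed

text \<open>Step (3) is a proximal step centred at \<open>Y k - C k / rho k\<close>.\<close>

definition prox_center :: "nat \<Rightarrow> tensor" where
  "prox_center k = (\<lambda>a b c. Y k a b c - C k a b c / rho k)"

lemma graph_update_dist_sq_le:
  obtains K where "\<And>k. 0 < k \<Longrightarrow>
    (tfro n m n (\<lambda>a b c. G (Suc k) a b c - prox_center k a b c))\<^sup>2
      \<le> (tfro n m n (\<lambda>a b c. G k a b c - prox_center k a b c))\<^sup>2 + K * (1 / rho k)"
proof
  fix k :: nat assume "0 < k"
  then have "graph_feasible n m (G k)" using step3_feas by (metis Suc_pred)
  from graph_obj_le_imp_dist_sq_le[OF step3_min[OF this] this rho_pos _ reweighted_laplacian_bounds[OF \<open>0 < k\<close>]]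
  show "(tfro n m n (\<lambda>a b c. G (Suc k) a b c - prox_center k a b c))\<^sup>2
      \<le> (tfro n m n (\<lambda>a b c. G k a b c - prox_center k a b c))\<^sup>2
        + 2 * (real m * (real n * sqrt (lam * (2 * real n * real d)))
          + gam / 2 * (\<Sum>a<n. \<Sum>b<m. \<Sum>c<n. (1 + \<bar>M a b c\<bar>)\<^sup>2)) * (1 / rho k)"
    unfolding prox_center_def using params(3) by simp
qed

lemma dist_prox_center_tendsto_zero:
  "(\<lambda>k. tfro n m n (\<lambda>a b c. G k a b c - prox_center k a b c)) \<longlonglongrightarrow> 0"
proof -
  have le: "tfro n m n (\<lambda>a b c. G k a b c - prox_center k a b c)
      \<le> tfro n m n (\<lambda>a b c. G k a b c - Y k a b c) + tfro n m n (\<lambda>a b c. C k a b c / rho k)" for k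
    using tfro_add_le[of n m n "\<lambda>a b c. G k a b c - Y k a b c" "\<lambda>a b c. C k a b c / rho k"]
    unfolding prox_center_def by (simp add: diff_diff_eq2 diff_add_eq)
  show ?thesis
    by (rule tfro_tendsto_zeroI[OF always_eventually[OF allI[OF le]]
        tendsto_add_zero[OF primal_residual_tendsto_zero scaled_dual_tendsto_zero]])
qed

lemma dist_next_prox_center_tendsto_zero:
  "(\<lambda>k. tfro n m n (\<lambda>a b c. G (Suc k) a b c - prox_center k a b c)) \<longlonglongrightarrow> 0"
proof -
  let ?before = "\<lambda>k. tfro n m n (\<lambda>a b c. G k a b c - prox_center k a b c)"
  obtain K where K: "\<And>k. 0 < k \<Longrightarrow> (tfro n m n (\<lambda>a b c. G (Suc k) a b c - prox_center k a b c))\<^sup>2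
      \<le> (?before k)\<^sup>2 + K * (1 / rho k)"
    using graph_update_dist_sq_le by blast
  have le: "tfro n m n (\<lambda>a b c. G (Suc k) a b c - prox_center k a b c)
      \<le> sqrt ((?before k)\<^sup>2 + K * (1 / rho k))" if "0 < k" for k
    using real_sqrt_le_mono[OF K[OF that]] by (simp add: tfro_nonneg)
  have "\<forall>\<^sub>F k in sequentially. tfro n m n (\<lambda>a b c. G (Suc k) a b c - prox_center k a b c)
      \<le> sqrt ((?before k)\<^sup>2 + K * (1 / rho k))"
    using eventually_gt_at_top[of 0] by (rule eventually_mono) (rule le)
  moreover have "(\<lambda>k. sqrt ((?before k)\<^sup>2 + K * (1 / rho k))) \<longlonglongrightarrow> sqrt (0\<^sup>2 + K * 0)"
    by (intro tendsto_intros dist_prox_center_tendsto_zero inverse_rho_tendsto_zero)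
  then have "(\<lambda>k. sqrt ((?before k)\<^sup>2 + K * (1 / rho k))) \<longlonglongrightarrow> 0" by simp
  ultimately show ?thesis by (rule tfro_tendsto_zeroI)
qed

lemma G_increment_tendsto_zero: "(\<lambda>k. tfro n m n (\<lambda>a b c. G (Suc k) a b c - G k a b c)) \<longlonglongrightarrow> 0"
proof -
  have le: "tfro n m n (\<lambda>a b c. G (Suc k) a b c - G k a b c)
      \<le> tfro n m n (\<lambda>a b c. G (Suc k) a b c - prox_center k a b c)
        + tfro n m n (\<lambda>a b c. G k a b c - prox_center k a b c)" for k
    using tfro_diff_le[of n m n "\<lambda>a b c. G (Suc k) a b c - prox_center k a b c"
        "\<lambda>a b c. G k a b c - prox_center k a b c"]
    by simp
  show ?thesis
    by (rule tfro_tendsto_zeroI[OF always_eventually[OF allI[OF le]] tendsto_add_zero[OF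
          dist_next_prox_center_tendsto_zero dist_prox_center_tendsto_zero]])
qed

lemma Y_increment_tendsto_zero: "(\<lambda>k. tfro n m n (\<lambda>a b c. Y (Suc k) a b c - Y k a b c)) \<longlonglongrightarrow> 0"
proof -
  let ?GY = "\<lambda>k. tfro n m n (\<lambda>a b c. G k a b c - Y k a b c)"
  let ?GG = "\<lambda>k. tfro n m n (\<lambda>a b c. G (Suc k) a b c - G k a b c)"
  have increment_le: "tfro n m n (\<lambda>a b c. Y (Suc k) a b c - Y k a b c) \<le> ?GG k + ?GY k + ?GY (Suc k)"
    for k
  proof -
    have "tfro n m n (\<lambda>a b c. Y (Suc k) a b c - Y k a b c)
        = tfro n m n (\<lambda>a b c. (G (Suc k) a b c - G k a b c + (G k a b c - Y k a b c))
            - (G (Suc k) a b c - Y (Suc k) a b c))"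
      by (rule tfro_cong) linarith
    also have "\<dots> \<le> tfro n m n (\<lambda>a b c. G (Suc k) a b c - G k a b c + (G k a b c - Y k a b c))
        + ?GY (Suc k)"
      by (rule tfro_diff_le)
    also have "\<dots> \<le> ?GG k + ?GY k + ?GY (Suc k)"
      by (rule add_right_mono[OF tfro_add_le])
    finally show ?thesis .
  qed
  have "(\<lambda>k. ?GG k + ?GY k + ?GY (Suc k)) \<longlonglongrightarrow> 0"
    by (intro tendsto_add_zero G_increment_tendsto_zero primal_residual_tendsto_zero
        LIMSEQ_Suc[OF primal_residual_tendsto_zero])
  then show ?thesis
    by (rule tfro_tendsto_zeroI[OF always_eventually[OF allI[OF increment_le]]])
qed

end

theorem theorem2:
  fixes n m d r :: nat
    and dv :: "nat \<Rightarrow> nat"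
    and X P :: "nat \<Rightarrow> real mat"
    and pres :: "nat \<Rightarrow> nat \<Rightarrow> bool"
    and M :: tensor
    and Om :: "(nat \<times> nat \<times> nat) set"
    and lam mu gam p :: real
    and w :: "nat \<Rightarrow> real"
    and Phi Phic :: "real mat"
    and A :: "nat \<Rightarrow> real mat"
    and W :: "nat \<Rightarrow> nat \<Rightarrow> real mat"
    and dl :: "nat \<Rightarrow> nat \<Rightarrow> real"
    and rho :: "nat \<Rightarrow> real"
    and G Y C :: "nat \<Rightarrow> tensor"
  assumes X_dim: "\<And>i. i < m \<Longrightarrow> X i \<in> carrier_mat (dv i) n"
    and P_def: "\<And>i. i < m \<Longrightarrow> P i = mat n n (\<lambda>(j, k). if j = k \<and> pres i j then 1 else 0)"
    and X_missing: "\<And>i j t. i < m \<Longrightarrow> j < n \<Longrightarrow> \<not> pres i j \<Longrightarrow> t < dv i \<Longrightarrow> X i $$ (t, j) = 0"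
    and X_inv: "\<And>i. i < m \<Longrightarrow> invertible_mat (X i * P i * transpose_mat (X i))"
    and params: "lam > 0" "mu > 0" "gam > 0" "0 < p" "p \<le> 1"
    and w_mono: "\<And>i j. i \<le> j \<Longrightarrow> j < min n m \<Longrightarrow> w j \<le> w i"
    and w_nonneg: "\<And>j. j < min n m \<Longrightarrow> 0 \<le> w j"
    and r_le: "r \<le> n"
    and Phi_dim: "Phi \<in> carrier_mat n r" and Phi_orth: "transpose_mat Phi * Phi = 1\<^sub>m r"
    and Phic_dim: "Phic \<in> carrier_mat n (n - r)"
    and Phibar_orth: "transpose_mat (mat n n (\<lambda>(a, b). if b < r then Phi $$ (a, b) else Phic $$ (a, b - r)))
                       * mat n n (\<lambda>(a, b). if b < r then Phi $$ (a, b) else Phic $$ (a, b - r)) = 1\<^sub>m n"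
    \<comment> \<open>initialization\<close>
    and init_rho: "rho 0 = 1 / 10000"
    and init_dl: "\<And>i. i < m \<Longrightarrow> dl 0 i = 1 / real m"
    and init_C: "\<And>a b c. a < n \<Longrightarrow> b < m \<Longrightarrow> c < n \<Longrightarrow> C 0 a b c = 0"
    and init_G: "\<And>a b c. a < n \<Longrightarrow> b < m \<Longrightarrow> c < n \<Longrightarrow> G 0 a b c = M a b c"
    and init_Y: "\<And>a b c. a < n \<Longrightarrow> b < m \<Longrightarrow> c < n \<Longrightarrow> Y 0 a b c = M a b c"
    \<comment> \<open>step (1)\<close>
    and step1_A: "\<And>k. A (Suc k) \<in> carrier_mat d n \<and> A (Suc k) * transpose_mat (A (Suc k)) = 1\<^sub>m d"
    and step1_W: "\<And>k i. i < m \<Longrightarrow>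
        W (Suc k) i = minv (X i * P i * transpose_mat (X i)) * X i * P i * transpose_mat (A (Suc k))"
    and step1_min: "\<And>k A' W'. A' \<in> carrier_mat d n \<Longrightarrow> A' * transpose_mat A' = 1\<^sub>m d \<Longrightarrow>
        (\<forall>i<m. W' i \<in> carrier_mat (dv i) d) \<Longrightarrow>
        view_obj n m lam X P (dl k) (G k) (A (Suc k)) (W (Suc k)) \<le> view_obj n m lam X P (dl k) (G k) A' W'"
    \<comment> \<open>step (2)\<close>
    and step2: "\<And>k i. i < m \<Longrightarrow>
        dl (Suc k) i = real (card {j. j < n \<and> pres i j})
          / sqrt (fview lam (X i) (P i) (A (Suc k)) (W (Suc k) i) (lat_slice n (G k) i))"
    \<comment> \<open>step (3)\<close>
    and step3_feas: "\<And>k. graph_feasible n m (G (Suc k))"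
    and step3_min: "\<And>k G'. graph_feasible n m G' \<Longrightarrow>
        graph_obj n m lam gam (rho k) (A (Suc k)) (dl (Suc k)) Om M (Y k) (C k) (G (Suc k))
          \<le> graph_obj n m lam gam (rho k) (A (Suc k)) (dl (Suc k)) Om M (Y k) (C k) G'"
    \<comment> \<open>step (4)\<close>
    and step4: "\<And>k. \<exists>Z :: tensor.
        (\<forall>s<r. is_shrink (mu / rho k) w p
            (front_slice n m (mode3 n (\<lambda>a b c. G (Suc k) a b c + C k a b c / rho k) Phi) s)
            (front_slice n m Z s)) \<and>
        (\<forall>a<n. \<forall>b<m. \<forall>s. r \<le> s \<and> s < n \<longrightarrow>
            Z a b s = mode3 n (\<lambda>a b c. G (Suc k) a b c + C k a b c / rho k) Phic a b (s - r)) \<and>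
        (\<forall>a<n. \<forall>b<m. \<forall>c<n. Y (Suc k) a b c =
            mode3 n Z (transpose_mat (mat n n (\<lambda>(a, b). if b < r then Phi $$ (a, b) else Phic $$ (a, b - r)))) a b c)"
    \<comment> \<open>step (5)\<close>
    and step5: "\<And>k a b c. a < n \<Longrightarrow> b < m \<Longrightarrow> c < n \<Longrightarrow>
        C (Suc k) a b c = C k a b c + rho k * (G (Suc k) a b c - Y (Suc k) a b c)"
    \<comment> \<open>step (6)\<close>
    and step6: "\<And>k. rho (Suc k) = 11 / 10 * rho k"
  shows "(\<lambda>k. tfro n m n (\<lambda>a b c. G k a b c - Y k a b c)) \<longlonglongrightarrow> 0
    \<and> (\<lambda>k. tfro n m n (\<lambda>a b c. G (Suc k) a b c - G k a b c)) \<longlonglongrightarrow> 0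
    \<and> (\<lambda>k. tfro n m n (\<lambda>a b c. Y (Suc k) a b c - Y k a b c)) \<longlonglongrightarrow> 0"
proof -
  interpret multiview_iteration n m d r X P pres M Om lam mu gam p w Phi Phic A W dl rho G Y C
    by unfold_locales (fact assms)+
  show ?thesis
    using primal_residual_tendsto_zero G_increment_tendsto_zero Y_increment_tendsto_zero by blast
qed

end
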